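(* Let $S$ and $T$ be finite semigroups without zero and let $h\ge0$ be an integer. Suppose that every language (over any finite alphabet) recognised by a finite Rees zero-matrix semigroup over $S$ has generalised star-height at most $h$, and likewise every language recognised by a finite Rees zero-matrix semigroup over $T$ has generalised star-height at most $h$. Then every language recognised by a finite Rees zero-matrix semigroup over the direct product $S\times T$ has generalised star-height at most $h$.
   Context: For a semigroup $U$ without zero, non-empty sets $I,\Lambda$ and a $\Lambda\times I$ matrix $M=(m_{\lambda i})$ with entries in $U\cup\{\mathbf{0}\}$ ($\mathbf{0}$ a new symbol), the Rees zero-matrix semigroup over $U$, $M^{0}[U;I,\Lambda;M]$, is $(I\times U\times\Lambda)\cup\{\mathbf{0}\}$ with $(i,u,\lambda)(j,v,\mu)=(i,u\,m_{\lambda j}\,v,\mu)$ if $m_{\lambda j}\ne\mathbf{0}$, $=\mathbf{0}$ if $m_{\lambda j}=\mathbf{0}$, and $x\mathbf{0}=\mathbf{0}x=\mathbf{0}$; it is finite when $U$, $I$, $\Lambda$ are finite. A language $L\subseteq A^{+}$ over a finite alphabet $A$ is recognised by a semigroup $V$ if there is a semigroup morphism $\psi:A^{+}\to V$ and a subset $X\subseteq V$ with $L=X\psi^{-1}$. Generalised regular expressions over $A$: $\emptyset$, $\varepsilon$ and each letter are expressions; if $E,F$ are expressions so are $E\cup F$, $EF$, $E^{\ast}$, $E^{c}$ (complement in $A^{\ast}$). Star-height: $h(\emptyset)=h(\varepsilon)=h(a)=0$, $h(E\cup F)=h(EF)=\max\{h(E),h(F)\}$, $h(E^{\ast})=h(E)+1$,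 $h(E^{c})=h(E)$; the star-height of a language is the minimum of $h(E)$ over expressions $E$ representing it. *)

theory Defs
  imports Main
begin

definition is_semigroup :: "'a set \<Rightarrow> ('a \<Rightarrow> 'a \<Rightarrow> 'a) \<Rightarrow> bool" where
  "is_semigroup U f \<longleftrightarrow> U \<noteq> {} \<and> (\<forall>x\<in>U. \<forall>y\<in>U. f x y \<in> U) \<and>
     (\<forall>x\<in>U. \<forall>y\<in>U. \<forall>z\<in>U. f (f x y) z = f x (f y z))"

definition has_zero :: "'a set \<Rightarrow> ('a \<Rightarrow> 'a \<Rightarrow> 'a) \<Rightarrow> bool" where
  "has_zero U f \<longleftrightarrow> (\<exists>z\<in>U. \<forall>x\<in>U. f z x = z \<and> f x z = z)"

definition prod_mult :: "('a \<Rightarrow> 'a \<Rightarrow> 'a) \<Rightarrow> ('b \<Rightarrow> 'b \<Rightarrow> 'b) \<Rightarrow> ('a \<times> 'b) \<Rightarrow> ('a \<times> 'b) \<Rightarrow> ('a \<times> 'b)" where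
  "prod_mult f g x y = (f (fst x) (fst y), g (snd x) (snd y))"

text \<open>Index sets I, Lambda are sets of naturals; None is the adjoined zero;
  the sandwich matrix is M :: lambda => i => 'a option (None = zero entry).\<close>

definition rees_carrier :: "'a set \<Rightarrow> nat set \<Rightarrow> nat set \<Rightarrow> (nat \<times> 'a \<times> nat) option set" where
  "rees_carrier U I L = insert None (Some ` (I \<times> U \<times> L))"

definition rees_mult :: "('a \<Rightarrow> 'a \<Rightarrow> 'a) \<Rightarrow> (nat \<Rightarrow> nat \<Rightarrow> 'a option) \<Rightarrow>
    (nat \<times> 'a \<times> nat) option \<Rightarrow> (nat \<times> 'a \<times> nat) option \<Rightarrow> (nat \<times> 'a \<times> nat) option" where
  "rees_mult f M x y = (case x of None \<Rightarrow> None | Some (i, u, l) \<Rightarrow>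
      (case y of None \<Rightarrow> None | Some (j, v, m) \<Rightarrow>
        (case M l j of None \<Rightarrow> None | Some a \<Rightarrow> Some (i, f (f u a) v, m))))"

definition rees_matrix_ok :: "'a set \<Rightarrow> nat set \<Rightarrow> nat set \<Rightarrow> (nat \<Rightarrow> nat \<Rightarrow> 'a option) \<Rightarrow> bool" where
  "rees_matrix_ok U I L M \<longleftrightarrow> (\<forall>l\<in>L. \<forall>i\<in>I. \<forall>a. M l i = Some a \<longrightarrow> a \<in> U)"

definition plus_words :: "nat set \<Rightarrow> nat list set" where
  "plus_words A = {w. w \<noteq> [] \<and> set w \<subseteq> A}"

definition star_words :: "nat set \<Rightarrow> nat list set" where
  "star_words A = {w. set w \<subseteq> A}"

definition semigroup_morphism_free ::
    "nat set \<Rightarrow> 'v set \<Rightarrow> ('v \<Rightarrow> 'v \<Rightarrow> 'v) \<Rightarrow> (nat list \<Rightarrow> 'v) \<Rightarrow> bool" where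
  "semigroup_morphism_free A V f \<psi> \<longleftrightarrow>
     (\<forall>w\<in>plus_words A. \<psi> w \<in> V) \<and>
     (\<forall>u\<in>plus_words A. \<forall>v\<in>plus_words A. \<psi> (u @ v) = f (\<psi> u) (\<psi> v))"

definition recognises :: "'v set \<Rightarrow> ('v \<Rightarrow> 'v \<Rightarrow> 'v) \<Rightarrow> nat set \<Rightarrow> nat list set \<Rightarrow> bool" where
  "recognises V f A L \<longleftrightarrow>
     (\<exists>\<psi> X. semigroup_morphism_free A V f \<psi> \<and> X \<subseteq> V \<and>
        L = {w \<in> plus_words A. \<psi> w \<in> X})"

datatype gre = Empty | Eps | Letter nat | Union gre gre | Conc gre gre | Star gre | Compl gre

fun gre_over :: "nat set \<Rightarrow> gre \<Rightarrow> bool" where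
  "gre_over A Empty = True"
| "gre_over A Eps = True"
| "gre_over A (Letter a) = (a \<in> A)"
| "gre_over A (Union E F) = (gre_over A E \<and> gre_over A F)"
| "gre_over A (Conc E F) = (gre_over A E \<and> gre_over A F)"
| "gre_over A (Star E) = gre_over A E"
| "gre_over A (Compl E) = gre_over A E"

definition conc_lang :: "nat list set \<Rightarrow> nat list set \<Rightarrow> nat list set" where
  "conc_lang K L = {u @ v | u v. u \<in> K \<and> v \<in> L}"

definition star_lang :: "nat list set \<Rightarrow> nat list set" where
  "star_lang K = {concat ws | ws. \<forall>w\<in>set ws. w \<in> K}"

fun gre_lang :: "nat set \<Rightarrow> gre \<Rightarrow> nat list set" where
  "gre_lang A Empty = {}"
| "gre_lang A Eps = {[]}"
| "gre_lang A (Letter a) = {[a]}"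
| "gre_lang A (Union E F) = gre_lang A E \<union> gre_lang A F"
| "gre_lang A (Conc E F) = conc_lang (gre_lang A E) (gre_lang A F)"
| "gre_lang A (Star E) = star_lang (gre_lang A E)"
| "gre_lang A (Compl E) = star_words A - gre_lang A E"

fun gre_height :: "gre \<Rightarrow> nat" where
  "gre_height Empty = 0"
| "gre_height Eps = 0"
| "gre_height (Letter a) = 0"
| "gre_height (Union E F) = max (gre_height E) (gre_height F)"
| "gre_height (Conc E F) = max (gre_height E) (gre_height F)"
| "gre_height (Star E) = Suc (gre_height E)"
| "gre_height (Compl E) = gre_height E"

definition star_height_le :: "nat set \<Rightarrow> nat list set \<Rightarrow> nat \<Rightarrow> bool" where
  "star_height_le A L h \<longleftrightarrow> (\<exists>E. gre_over A E \<and> gre_lang A E = L \<and> gre_height E \<le> h)"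

definition rees_languages_sh_le :: "'a set \<Rightarrow> ('a \<Rightarrow> 'a \<Rightarrow> 'a) \<Rightarrow> nat \<Rightarrow> bool" where
  "rees_languages_sh_le U f h \<longleftrightarrow>
     (\<forall>I Lam M A L. finite I \<and> I \<noteq> {} \<and> finite Lam \<and> Lam \<noteq> {} \<and>
        rees_matrix_ok U I Lam M \<and> finite A \<and>
        recognises (rees_carrier U I Lam) (rees_mult f M) A L
        \<longrightarrow> star_height_le A L h)"

end

theory Submission
  imports Defs
begin

text \<open>The Rees zero-matrix semigroup over \<open>S \<times> T\<close> with sandwich matrix \<open>M\<close> maps
  homomorphically onto the Rees zero-matrix semigroups over \<open>S\<close> and over \<open>T\<close> with the
  projected matrices, and the two projections together are injective. Hence a language
  \<open>L = \<psi>\<inverse>(X)\<close> is the finite union, over \<open>x \<in> X\<close>, of the intersections of the two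
  languages cut out by the projections of \<open>x\<close>; each of these is recognised by a Rees
  zero-matrix semigroup over \<open>S\<close> or over \<open>T\<close>, and generalised star-height is preserved by
  finite unions and, via complement, by intersections.\<close>

lemma gre_lang_subset_star_words: "gre_over A E \<Longrightarrow> gre_lang A E \<subseteq> star_words A"
  by (induction E)
    (fastforce simp: conc_lang_def star_lang_def star_words_def subset_iff)+

lemma star_height_le_Un:
  assumes "star_height_le A K h" and "star_height_le A L h"
  shows "star_height_le A (K \<union> L) h"
proof -
  obtain E F where "gre_over A E" "gre_lang A E = K" "gre_height E \<le> h"
    and "gre_over A F" "gre_lang A F = L" "gre_height F \<le> h"
    using assms unfolding star_height_le_def by blast
  then show ?thesis
    unfolding star_height_le_def by (intro exI[of _ "Union E F"]) simp
qed

lemma star_height_le_Int: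
  assumes "star_height_le A K h" and "star_height_le A L h"
  shows "star_height_le A (K \<inter> L) h"
proof -
  obtain E F where E: "gre_over A E" "gre_lang A E = K" "gre_height E \<le> h"
    and F: "gre_over A F" "gre_lang A F = L" "gre_height F \<le> h"
    using assms unfolding star_height_le_def by blast
  have "K \<subseteq> star_words A" "L \<subseteq> star_words A"
    using E(1,2) F(1,2) gre_lang_subset_star_words by blast+
  then have "gre_lang A (Compl (Union (Compl E) (Compl F))) = K \<inter> L"
    using E(2) F(2) by auto
  then show ?thesis
    unfolding star_height_le_def
    by (intro exI[of _ "Compl (Union (Compl E) (Compl F))"]) (simp add: E F)
qed

lemma star_height_le_UN:
  "finite X \<Longrightarrow> (\<And>x. x \<in> X \<Longrightarrow> star_height_le A (K x) h) \<Longrightarrow>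
    star_height_le A (\<Union>x\<in>X. K x) h"
proof (induction X rule: finite_induct)
  case empty
  show ?case unfolding star_height_le_def by (intro exI[of _ Empty]) simp
next
  case (insert x X)
  then show ?case by (simp add: star_height_le_Un)
qed

definition semigroup_hom ::
    "'v set \<Rightarrow> ('v \<Rightarrow> 'v \<Rightarrow> 'v) \<Rightarrow> 'w set \<Rightarrow> ('w \<Rightarrow> 'w \<Rightarrow> 'w) \<Rightarrow> ('v \<Rightarrow> 'w) \<Rightarrow> bool" where
  "semigroup_hom V f W g \<theta> \<longleftrightarrow>
     (\<forall>x\<in>V. \<theta> x \<in> W) \<and> (\<forall>x\<in>V. \<forall>y\<in>V. \<theta> (f x y) = g (\<theta> x) (\<theta> y))"

lemma recognises_hom_preimage:
  assumes "semigroup_morphism_free A V f \<psi>" and "semigroup_hom V f W g \<theta>" and "Y \<subseteq> W"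
  shows "recognises W g A {w \<in> plus_words A. \<theta> (\<psi> w) \<in> Y}"
proof -
  have "semigroup_morphism_free A W g (\<theta> \<circ> \<psi>)"
    using assms(1,2) unfolding semigroup_morphism_free_def semigroup_hom_def by auto
  then show ?thesis
    unfolding recognises_def using assms(3) by (intro exI[of _ "\<theta> \<circ> \<psi>"] exI[of _ Y]) auto
qed

lemma star_height_le_if_recognised_by_subdirect_product:
  assumes "finite V" and "recognises V f A L"
    and "semigroup_hom V f V1 f1 \<theta>" and "semigroup_hom V f V2 f2 \<eta>"
    and "inj_on (\<lambda>x. (\<theta> x, \<eta> x)) V"
    and "\<And>K. recognises V1 f1 A K \<Longrightarrow> star_height_le A K h"
    and "\<And>K. recognises V2 f2 A K \<Longrightarrow> star_height_le A K h"
  shows "star_height_le A L h"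
proof -
  obtain \<psi> X where \<psi>: "semigroup_morphism_free A V f \<psi>" and "X \<subseteq> V"
    and L: "L = {w \<in> plus_words A. \<psi> w \<in> X}"
    using assms(2) unfolding recognises_def by blast
  define K1 where "K1 x = {w \<in> plus_words A. \<theta> (\<psi> w) \<in> {\<theta> x}}" for x
  define K2 where "K2 x = {w \<in> plus_words A. \<eta> (\<psi> w) \<in> {\<eta> x}}" for x
  have \<psi>V: "\<psi> w \<in> V" if "w \<in> plus_words A" for w
    using \<psi> that unfolding semigroup_morphism_free_def by blast
  have "L = (\<Union>x\<in>X. K1 x \<inter> K2 x)"
  proof (intro equalityI subsetI)
    fix w assume "w \<in> L"
    then show "w \<in> (\<Union>x\<in>X. K1 x \<inter> K2 x)"
      unfolding L K1_def K2_def by blast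
  next
    fix w assume "w \<in> (\<Union>x\<in>X. K1 x \<inter> K2 x)"
    then obtain x where "x \<in> X" "w \<in> plus_words A"
      and "(\<theta> (\<psi> w), \<eta> (\<psi> w)) = (\<theta> x, \<eta> x)"
      unfolding K1_def K2_def by blast
    with \<psi>V \<open>X \<subseteq> V\<close> assms(5) have "\<psi> w = x"
      by (meson inj_onD subsetD)
    with \<open>x \<in> X\<close> \<open>w \<in> plus_words A\<close> show "w \<in> L"
      unfolding L by blast
  qed
  moreover have "star_height_le A (K1 x \<inter> K2 x) h" if "x \<in> X" for x
  proof (rule star_height_le_Int)
    have "{\<theta> x} \<subseteq> V1" "{\<eta> x} \<subseteq> V2"
      using assms(3,4) that \<open>X \<subseteq> V\<close> unfolding semigroup_hom_def by auto
    then show "star_height_le A (K1 x) h" "star_height_le A (K2 x) h"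
      unfolding K1_def K2_def
      by (intro assms(6) assms(7) recognises_hom_preimage[OF \<psi>] assms(3,4); simp)+
  qed
  ultimately show ?thesis
    using star_height_le_UN[OF finite_subset[OF \<open>X \<subseteq> V\<close> assms(1)]] by simp
qed

definition rees_map :: "('a \<Rightarrow> 'b) \<Rightarrow> (nat \<times> 'a \<times> nat) option \<Rightarrow> (nat \<times> 'b \<times> nat) option" where
  "rees_map \<phi> = map_option (\<lambda>(i, u, l). (i, \<phi> u, l))"

definition matrix_map :: "('a \<Rightarrow> 'b) \<Rightarrow> (nat \<Rightarrow> nat \<Rightarrow> 'a option) \<Rightarrow> nat \<Rightarrow> nat \<Rightarrow> 'b option" where
  "matrix_map \<phi> M = (\<lambda>l i. map_option \<phi> (M l i))"

lemma rees_matrix_ok_matrix_map: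
  "rees_matrix_ok U I L M \<Longrightarrow> \<phi> ` U \<subseteq> U' \<Longrightarrow> rees_matrix_ok U' I L (matrix_map \<phi> M)"
  unfolding rees_matrix_ok_def matrix_map_def by blast

lemma semigroup_hom_rees_map:
  assumes "\<phi> ` U \<subseteq> U'" and "\<And>u v. \<phi> (f u v) = f' (\<phi> u) (\<phi> v)"
  shows "semigroup_hom (rees_carrier U I L) (rees_mult f M)
           (rees_carrier U' I L) (rees_mult f' (matrix_map \<phi> M)) (rees_map \<phi>)"
proof -
  have "rees_map \<phi> (rees_mult f M x y) =
      rees_mult f' (matrix_map \<phi> M) (rees_map \<phi> x) (rees_map \<phi> y)" for x y
    unfolding rees_map_def matrix_map_def rees_mult_def
    by (cases x; cases y) (auto simp: assms(2) split: option.split)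
  moreover have "rees_map \<phi> x \<in> rees_carrier U' I L" if "x \<in> rees_carrier U I L" for x
    using that assms(1) unfolding rees_map_def rees_carrier_def by auto
  ultimately show ?thesis
    unfolding semigroup_hom_def by blast
qed

lemma inj_rees_map_fst_snd: "inj (\<lambda>x. (rees_map fst x, rees_map snd x))"
proof (rule injI)
  fix x y :: "(nat \<times> ('a \<times> 'b) \<times> nat) option"
  assume "(rees_map fst x, rees_map snd x) = (rees_map fst y, rees_map snd y)"
  then show "x = y"
    unfolding rees_map_def by (cases x; cases y) (auto simp: prod_eq_iff)
qed

lemma rees_languages_sh_leD:
  assumes "rees_languages_sh_le U f h" and "finite I" "I \<noteq> {}" "finite Lam" "Lam \<noteq> {}"
    and "rees_matrix_ok U I Lam M" and "finite A"
    and "recognises (rees_carrier U I Lam) (rees_mult f M) A L"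
  shows "star_height_le A L h"
  using assms(1) unfolding rees_languages_sh_le_def
  by (elim allE[of _ I] allE[of _ Lam] allE[of _ M] allE[of _ A] allE[of _ L] impE)
     (simp_all add: assms(2-))

lemma finite_rees_carrier: "finite U \<Longrightarrow> finite I \<Longrightarrow> finite L \<Longrightarrow> finite (rees_carrier U I L)"
  unfolding rees_carrier_def by simp

theorem theorem3p5:
  fixes S :: "'a set" and f :: "'a \<Rightarrow> 'a \<Rightarrow> 'a"
    and T :: "'b set" and g :: "'b \<Rightarrow> 'b \<Rightarrow> 'b"
    and h :: nat
  assumes "is_semigroup S f" and "finite S" and "\<not> has_zero S f"
    and "is_semigroup T g" and "finite T" and "\<not> has_zero T g"
    and "rees_languages_sh_le S f h"
    and "rees_languages_sh_le T g h"
  shows "rees_languages_sh_le (S \<times> T) (prod_mult f g) h"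
  unfolding rees_languages_sh_le_def
proof (intro allI impI, elim conjE)
  fix I Lam M A L
  assume fin: "finite I" "I \<noteq> {}" "finite Lam" "Lam \<noteq> {}" "finite A"
    and M: "rees_matrix_ok (S \<times> T) I Lam M"
    and L: "recognises (rees_carrier (S \<times> T) I Lam) (rees_mult (prod_mult f g) M) A L"
  have "rees_matrix_ok S I Lam (matrix_map fst M)" "rees_matrix_ok T I Lam (matrix_map snd M)"
    by (rule rees_matrix_ok_matrix_map[OF M], force)+
  note sh_fst = rees_languages_sh_leD[OF assms(7) fin(1-4) this(1) fin(5)]
    and sh_snd = rees_languages_sh_leD[OF assms(8) fin(1-4) this(2) fin(5)]
  show "star_height_le A L h"
  proof (rule star_height_le_if_recognised_by_subdirect_product[OF _ L _ _ _ sh_fst sh_snd])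
    show "finite (rees_carrier (S \<times> T) I Lam)"
      using assms(2,5) fin by (simp add: finite_rees_carrier)
    show "semigroup_hom (rees_carrier (S \<times> T) I Lam) (rees_mult (prod_mult f g) M)
        (rees_carrier S I Lam) (rees_mult f (matrix_map fst M)) (rees_map fst)"
      by (rule semigroup_hom_rees_map) (auto simp: prod_mult_def)
    show "semigroup_hom (rees_carrier (S \<times> T) I Lam) (rees_mult (prod_mult f g) M)
        (rees_carrier T I Lam) (rees_mult g (matrix_map snd M)) (rees_map snd)"
      by (rule semigroup_hom_rees_map) (auto simp: prod_mult_def)
    show "inj_on (\<lambda>x. (rees_map fst x, rees_map snd x)) (rees_carrier (S \<times> T) I Lam)"
      using inj_rees_map_fst_snd by (rule inj_on_subset) simp
  qed
qed

end
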